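(* Let $H=E+D$ and $K=E'+D'$ be closed additive subgroups of $\mathbb{R}^{n}$ (with decompositions as in the context) and let $f:H\to K$ be a homomorphism of closed additive groups. Then (i) $\mathrm{Ker}(f)$ is a closed additive subgroup of $\mathbb{R}^n$, and (ii) $\mathrm{Im}(f)$ is a closed additive subgroup of $\mathbb{R}^n$.
   Context: Every closed additive subgroup $H$ of $\mathbb{R}^n$ can be written $H=E+D$ with $E$ a vector subspace and $D$ a discrete additive subgroup with $E\cap\mathrm{vect}(D)=\{0\}$ ($\mathrm{vect}$ = real span); such decompositions $H=E+D$, $K=E'+D'$ are fixed. A map $f:H\to K$ is a homomorphism of closed additive groups if there are a linear map $f_1:E\to E'$ and a group homomorphism $f_2:D\to D'$ with $f(\lambda x+py)=\lambda f_1(x)+pf_2(y)$ for all $\lambda\in\mathbb{R}$, $p\in\mathbb{Z}$, $x\in E$, $y\in D$. *)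

theory Defs
  imports "HOL-Analysis.Analysis"
begin

definition add_subgroup :: "'a::real_vector set \<Rightarrow> bool" where
  "add_subgroup G \<longleftrightarrow> 0 \<in> G \<and> (\<forall>x\<in>G. \<forall>y\<in>G. x + y \<in> G) \<and> (\<forall>x\<in>G. - x \<in> G)"

definition closed_add_subgroup :: "(real^'n) set \<Rightarrow> bool" where
  "closed_add_subgroup G \<longleftrightarrow> add_subgroup G \<and> closed G"

definition discrete_add_subgroup :: "(real^'n) set \<Rightarrow> bool" where
  "discrete_add_subgroup D \<longleftrightarrow> add_subgroup D \<and> discrete D"

definition csg_decomposition :: "(real^'n) set \<Rightarrow> (real^'n) set \<Rightarrow> (real^'n) set \<Rightarrow> bool" where
  "csg_decomposition H E D \<longleftrightarrow>
     subspace E \<and> discrete_add_subgroup D \<and> E \<inter> span D = {0} \<and>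
     H = {x + y | x y. x \<in> E \<and> y \<in> D}"

text \<open>f : H \<rightarrow> K is a homomorphism of closed additive groups w.r.t. fixed decompositions
  H = E + D, K = E' + D'.\<close>
definition csg_hom ::
  "(real^'n) set \<Rightarrow> (real^'n) set \<Rightarrow> (real^'n) set \<Rightarrow> (real^'n) set \<Rightarrow>
   (real^'n \<Rightarrow> real^'n) \<Rightarrow> bool" where
  "csg_hom E D E' D' f \<longleftrightarrow>
     (\<exists>f1 f2.
        f1 ` E \<subseteq> E' \<and>
        (\<forall>x\<in>E. \<forall>y\<in>E. f1 (x + y) = f1 x + f1 y) \<and>
        (\<forall>c. \<forall>x\<in>E. f1 (c *\<^sub>R x) = c *\<^sub>R f1 x) \<and>
        f2 ` D \<subseteq> D' \<and>
        (\<forall>x\<in>D. \<forall>y\<in>D. f2 (x + y) = f2 x + f2 y) \<and>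
        (\<forall>(lam::real) (p::int). \<forall>x\<in>E. \<forall>y\<in>D.
           f (lam *\<^sub>R x + of_int p *\<^sub>R y) = lam *\<^sub>R f1 x + of_int p *\<^sub>R f2 y))"

end

theory Submission
  imports Defs
begin

text \<open>If \<open>H = E + D\<close> and \<open>h\<close> is the linear projection of \<open>E \<oplus> span D\<close> onto \<open>span D\<close> along \<open>E\<close>,
  then \<open>H = h\<^sup>-\<^sup>1(D) \<inter> (id - h)\<^sup>-\<^sup>1(E)\<close>; both preimages are closed, because \<open>E\<close> is a subspace
  of a finite-dimensional space and a discrete subgroup is uniformly discrete. Kernel and image
  of a homomorphism \<open>f = f\<^sub>1 + f\<^sub>2\<close> again split as a subspace of \<open>E\<close> (resp. \<open>E'\<close>) plus a
  subgroup of \<open>D\<close> (resp. \<open>D'\<close>): for the kernel, \<open>f\<^sub>1 x = - f\<^sub>2 y \<in> E' \<inter> span D' = {0}\<close>.\<close>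

lemma uniform_discrete_add_subgroup:
  fixes D :: "'a::real_normed_vector set"
  assumes "add_subgroup D" and "discrete D"
  shows "uniform_discrete D"
proof -
  have D0: "0 \<in> D" and Ddiff: "\<And>x y. x \<in> D \<Longrightarrow> y \<in> D \<Longrightarrow> x - y \<in> D"
    using assms(1) unfolding add_subgroup_def by (metis diff_conv_add_uminus)+
  obtain e where "e > 0" and e: "\<And>y. y \<in> D \<Longrightarrow> dist 0 y < e \<Longrightarrow> y = 0"
    using discreteD[OF assms(2) D0] unfolding isolated_in_dist_Ex_iff by blast
  show ?thesis
  proof (rule uniformI1[OF \<open>e > 0\<close>])
    fix x y assume "x \<in> D" "y \<in> D" "dist x y < e"
    then have "x - y = 0"
      using e[OF Ddiff[OF \<open>x \<in> D\<close> \<open>y \<in> D\<close>]] by (simp add: dist_norm norm_minus_commute)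
    then show "x = y" by simp
  qed
qed

lemma linear_projection_along_exists:
  fixes E F :: "'a::real_vector set"
  assumes "subspace E" "subspace F" "E \<inter> F = {0}"
  obtains h :: "'a \<Rightarrow> 'a" where "linear h" "\<And>x y. x \<in> E \<Longrightarrow> y \<in> F \<Longrightarrow> h (x + y) = y"
proof -
  let ?add = "\<lambda>(x::'a, y). x + y"
  have "linear ?add"
    by (auto simp: linear_iff algebra_simps)
  moreover have "inj_on ?add (E \<times> F)"
  proof (rule inj_onI, clarify)
    fix x y x' y' assume "x \<in> E" "y \<in> F" "x' \<in> E" "y' \<in> F" "x + y = x' + y'"
    then have "x - x' = y' - y" "x - x' \<in> E" "y' - y \<in> F"
      using assms(1,2) by (auto simp: algebra_simps subspace_diff)
    then have "x - x' \<in> E \<inter> F"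
      by simp
    then have "x - x' = 0"
      using assms(3) by simp
    then show "x = x' \<and> y = y'"
      using \<open>x - x' = y' - y\<close> by simp
  qed
  ultimately obtain g where "linear g" and g: "\<forall>v\<in>E \<times> F. g (?add v) = v"
    using linear_exists_left_inverse_on[OF _ subspace_Times[OF assms(1,2)]] by blast
  show thesis
  proof (rule that)
    show "linear (snd \<circ> g)"
      using linear_compose[OF \<open>linear g\<close> linear_snd] .
    fix x y assume "x \<in> E" "y \<in> F"
    then have "g (x + y) = (x, y)"
      using bspec[OF g, of "(x, y)"] by simp
    then show "(snd \<circ> g) (x + y) = y"
      by simp
  qed
qed

lemma closed_subspace_plus_discrete_subgroup:
  fixes E D :: "'a::euclidean_space set"
  assumes "subspace E" "add_subgroup D" "discrete D" "E \<inter> span D = {0}"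
  shows "closed {x + y | x y. x \<in> E \<and> y \<in> D}"
proof -
  obtain h where "linear h" and h: "\<And>x y. x \<in> E \<Longrightarrow> y \<in> span D \<Longrightarrow> h (x + y) = y"
    using linear_projection_along_exists[OF assms(1) subspace_span assms(4)] by blast
  then have hbl: "bounded_linear h"
    using linear_conv_bounded_linear by blast
  have "{x + y | x y. x \<in> E \<and> y \<in> D} = h -` D \<inter> (\<lambda>z. z - h z) -` E"
  proof (intro set_eqI iffI)
    fix z assume "z \<in> h -` D \<inter> (\<lambda>z. z - h z) -` E"
    moreover have "z = (z - h z) + h z"
      by simp
    ultimately show "z \<in> {x + y | x y. x \<in> E \<and> y \<in> D}"
      by blast
  qed (auto simp: h span_base)
  moreover have "closed (h -` D)"
    using uniform_discrete_imp_closed[OF uniform_discrete_add_subgroup[OF assms(2,3)]] hbl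
    by (intro continuous_closed_vimage linear_continuous_at)
  moreover have "closed ((\<lambda>z. z - h z) -` E)"
    using closed_subspace[OF assms(1)] hbl
    by (intro continuous_closed_vimage linear_continuous_at bounded_linear_sub bounded_linear_ident)
  ultimately show ?thesis by auto
qed

lemma add_subgroup_subspace_plus:
  fixes E D :: "'a::real_vector set"
  assumes "subspace E" "add_subgroup D"
  shows "add_subgroup {x + y | x y. x \<in> E \<and> y \<in> D}"
  unfolding add_subgroup_def
proof (intro conjI ballI)
  show "0 \<in> {x + y | x y. x \<in> E \<and> y \<in> D}"
    using assms subspace_0 unfolding add_subgroup_def by force
next
  fix a b assume "a \<in> {x + y | x y. x \<in> E \<and> y \<in> D}" "b \<in> {x + y | x y. x \<in> E \<and> y \<in> D}"
  then obtain x y x' y' where "a = x + y" "b = x' + y'" "x \<in> E" "x' \<in> E" "y \<in> D" "y' \<in> D"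
    by blast
  moreover have "a + b = (x + x') + (y + y')"
    using calculation by (simp add: algebra_simps)
  ultimately show "a + b \<in> {x + y | x y. x \<in> E \<and> y \<in> D}"
    using assms subspace_add unfolding add_subgroup_def by blast
next
  fix a assume "a \<in> {x + y | x y. x \<in> E \<and> y \<in> D}"
  then obtain x y where "a = x + y" "x \<in> E" "y \<in> D"
    by blast
  moreover have "- a = - x + - y"
    using calculation by simp
  ultimately show "- a \<in> {x + y | x y. x \<in> E \<and> y \<in> D}"
    using assms subspace_neg unfolding add_subgroup_def by blast
qed

lemma closed_add_subgroup_plus_in_decomposition:
  fixes E D E\<^sub>0 D\<^sub>0 :: "(real^'n) set"
  assumes "E \<inter> span D = {0}" "discrete D" "E\<^sub>0 \<subseteq> E" "D\<^sub>0 \<subseteq> D"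
    and "subspace E\<^sub>0" "add_subgroup D\<^sub>0"
  shows "closed_add_subgroup {x + y | x y. x \<in> E\<^sub>0 \<and> y \<in> D\<^sub>0}"
proof -
  have "E\<^sub>0 \<inter> span D\<^sub>0 = {0}"
    using assms(1,3,4) span_mono subspace_0[OF assms(5)] span_zero by blast
  moreover have "discrete D\<^sub>0"
    using discrete_subset[OF assms(2,4)] .
  ultimately show ?thesis
    unfolding closed_add_subgroup_def
    using assms(5,6) add_subgroup_subspace_plus closed_subspace_plus_discrete_subgroup by blast
qed

lemma subspace_image_linear_on:
  fixes f :: "'a::real_vector \<Rightarrow> 'b::real_vector"
  assumes "subspace E" "\<forall>x\<in>E. \<forall>y\<in>E. f (x + y) = f x + f y" "\<forall>c. \<forall>x\<in>E. f (c *\<^sub>R x) = c *\<^sub>R f x"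
  shows "subspace (f ` E)"
  unfolding subspace_def
proof (intro conjI ballI allI)
  have "f (0 *\<^sub>R 0) = 0 *\<^sub>R f 0"
    using assms(1,3) subspace_0 by blast
  then show "0 \<in> f ` E"
    using assms(1) subspace_0 by (metis image_eqI scaleR_zero_left)
next
  fix a b assume "a \<in> f ` E" "b \<in> f ` E"
  then obtain x y where "a = f x" "b = f y" "x \<in> E" "y \<in> E"
    by blast
  then show "a + b \<in> f ` E"
    using assms(2) subspace_add[OF assms(1)] by (metis image_eqI)
next
  fix c a assume "a \<in> f ` E"
  then obtain x where "a = f x" "x \<in> E"
    by blast
  then show "c *\<^sub>R a \<in> f ` E"
    using assms(3) subspace_mul[OF assms(1)] by (metis image_eqI)
qed

lemma subspace_kernel_linear_on:
  fixes f :: "'a::real_vector \<Rightarrow> 'b::real_vector"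
  assumes "subspace E" "\<forall>x\<in>E. \<forall>y\<in>E. f (x + y) = f x + f y" "\<forall>c. \<forall>x\<in>E. f (c *\<^sub>R x) = c *\<^sub>R f x"
  shows "subspace {x \<in> E. f x = 0}"
  unfolding subspace_def
proof (intro conjI ballI allI)
  have "f (0 *\<^sub>R 0) = 0 *\<^sub>R f 0"
    using assms(1,3) subspace_0 by blast
  then show "0 \<in> {x \<in> E. f x = 0}"
    using assms(1) subspace_0 by simp
next
  fix x y assume "x \<in> {x \<in> E. f x = 0}" "y \<in> {x \<in> E. f x = 0}"
  then show "x + y \<in> {x \<in> E. f x = 0}"
    using assms(2) subspace_add[OF assms(1)] by simp
next
  fix c x assume "x \<in> {x \<in> E. f x = 0}"
  then show "c *\<^sub>R x \<in> {x \<in> E. f x = 0}"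
    using assms(3) subspace_mul[OF assms(1)] by simp
qed

lemma additive_on_add_subgroup_zero_minus:
  fixes f :: "'a::real_vector \<Rightarrow> 'b::real_vector"
  assumes "add_subgroup D" "\<forall>x\<in>D. \<forall>y\<in>D. f (x + y) = f x + f y"
  shows "f 0 = 0" and "\<And>y. y \<in> D \<Longrightarrow> f (- y) = - f y"
proof -
  have D0: "0 \<in> D" and Dneg: "\<And>y. y \<in> D \<Longrightarrow> - y \<in> D"
    using assms(1) unfolding add_subgroup_def by blast+
  have "f (0 + 0) = f 0 + f 0"
    using assms(2) D0 by blast
  then show f0: "f 0 = 0"
    by simp
  fix y assume "y \<in> D"
  then have "f (y + - y) = f y + f (- y)"
    using assms(2) Dneg by blast
  then have "f y + f (- y) = 0"
    using f0 by simp
  then show "f (- y) = - f y"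
    by (simp add: eq_neg_iff_add_eq_0 add.commute)
qed

lemma add_subgroup_image_additive_on:
  fixes f :: "'a::real_vector \<Rightarrow> 'b::real_vector"
  assumes "add_subgroup D" "\<forall>x\<in>D. \<forall>y\<in>D. f (x + y) = f x + f y"
  shows "add_subgroup (f ` D)"
  unfolding add_subgroup_def
proof (intro conjI ballI)
  show "0 \<in> f ` D"
    using assms(1) additive_on_add_subgroup_zero_minus(1)[OF assms]
    unfolding add_subgroup_def by force
next
  fix a b assume "a \<in> f ` D" "b \<in> f ` D"
  then obtain x y where "a = f x" "b = f y" "x \<in> D" "y \<in> D"
    by blast
  moreover have "f x + f y = f (x + y)" "x + y \<in> D"
    using assms calculation(3,4) unfolding add_subgroup_def by simp_all
  ultimately show "a + b \<in> f ` D"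
    by simp
next
  fix a assume "a \<in> f ` D"
  then obtain x where "a = f x" "x \<in> D"
    by blast
  then show "- a \<in> f ` D"
    using assms additive_on_add_subgroup_zero_minus(2)[OF assms]
    unfolding add_subgroup_def by (metis rev_image_eqI)
qed

lemma add_subgroup_kernel_additive_on:
  fixes f :: "'a::real_vector \<Rightarrow> 'b::real_vector"
  assumes "add_subgroup D" "\<forall>x\<in>D. \<forall>y\<in>D. f (x + y) = f x + f y"
  shows "add_subgroup {y \<in> D. f y = 0}"
  using assms additive_on_add_subgroup_zero_minus[OF assms] unfolding add_subgroup_def
  by simp

lemma csg_homE:
  assumes "csg_hom E D E' D' f"
  obtains f\<^sub>1 f\<^sub>2 where "f\<^sub>1 ` E \<subseteq> E'"
    and "\<forall>x\<in>E. \<forall>y\<in>E. f\<^sub>1 (x + y) = f\<^sub>1 x + f\<^sub>1 y" and "\<forall>c. \<forall>x\<in>E. f\<^sub>1 (c *\<^sub>R x) = c *\<^sub>R f\<^sub>1 x"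
    and "f\<^sub>2 ` D \<subseteq> D'" and "\<forall>x\<in>D. \<forall>y\<in>D. f\<^sub>2 (x + y) = f\<^sub>2 x + f\<^sub>2 y"
    and "\<And>x y. x \<in> E \<Longrightarrow> y \<in> D \<Longrightarrow> f (x + y) = f\<^sub>1 x + f\<^sub>2 y"
proof -
  obtain f\<^sub>1 f\<^sub>2 where f\<^sub>1: "f\<^sub>1 ` E \<subseteq> E'"
      "\<forall>x\<in>E. \<forall>y\<in>E. f\<^sub>1 (x + y) = f\<^sub>1 x + f\<^sub>1 y" "\<forall>c. \<forall>x\<in>E. f\<^sub>1 (c *\<^sub>R x) = c *\<^sub>R f\<^sub>1 x"
    and f\<^sub>2: "f\<^sub>2 ` D \<subseteq> D'" "\<forall>x\<in>D. \<forall>y\<in>D. f\<^sub>2 (x + y) = f\<^sub>2 x + f\<^sub>2 y"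
    and f: "\<forall>(c::real) (p::int). \<forall>x\<in>E. \<forall>y\<in>D.
      f (c *\<^sub>R x + of_int p *\<^sub>R y) = c *\<^sub>R f\<^sub>1 x + of_int p *\<^sub>R f\<^sub>2 y"
    using assms unfolding csg_hom_def by (elim exE conjE)
  have "f (x + y) = f\<^sub>1 x + f\<^sub>2 y" if "x \<in> E" "y \<in> D" for x y
    using f that by (metis of_int_1 scaleR_one)
  then show thesis
    by (rule that[OF f\<^sub>1 f\<^sub>2])
qed

lemma kernel_eq_plus_kernels:
  fixes f f\<^sub>1 f\<^sub>2 :: "'a::real_vector \<Rightarrow> 'b::real_vector"
  assumes "f\<^sub>1 ` E \<subseteq> E'" "f\<^sub>2 ` D \<subseteq> D'" "E' \<inter> span D' = {0}"
    and f: "\<And>x y. x \<in> E \<Longrightarrow> y \<in> D \<Longrightarrow> f (x + y) = f\<^sub>1 x + f\<^sub>2 y"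
  shows "{z \<in> {x + y | x y. x \<in> E \<and> y \<in> D}. f z = 0}
    = {x + y | x y. x \<in> {x \<in> E. f\<^sub>1 x = 0} \<and> y \<in> {y \<in> D. f\<^sub>2 y = 0}}"
proof (intro set_eqI iffI)
  fix z assume "z \<in> {z \<in> {x + y | x y. x \<in> E \<and> y \<in> D}. f z = 0}"
  then obtain x y where z: "z = x + y" "x \<in> E" "y \<in> D" and "f z = 0"
    by blast
  then have sum0: "f\<^sub>1 x + f\<^sub>2 y = 0"
    using f by simp
  then have "f\<^sub>1 x = - f\<^sub>2 y"
    by (simp add: eq_neg_iff_add_eq_0)
  moreover have "f\<^sub>1 x \<in> E'" "- f\<^sub>2 y \<in> span D'"
    using assms(1,2) z span_base span_neg by blast+
  ultimately have "f\<^sub>1 x \<in> E' \<inter> span D'"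
    by simp
  then have "f\<^sub>1 x = 0" "f\<^sub>2 y = 0"
    using assms(3) sum0 by auto
  with z show "z \<in> {x + y | x y. x \<in> {x \<in> E. f\<^sub>1 x = 0} \<and> y \<in> {y \<in> D. f\<^sub>2 y = 0}}"
    by blast
next
  fix z assume "z \<in> {x + y | x y. x \<in> {x \<in> E. f\<^sub>1 x = 0} \<and> y \<in> {y \<in> D. f\<^sub>2 y = 0}}"
  then obtain x y where z: "z = x + y" "x \<in> E" "y \<in> D" and "f\<^sub>1 x = 0" "f\<^sub>2 y = 0"
    by blast
  then have "f z = 0"
    using f by simp
  with z show "z \<in> {z \<in> {x + y | x y. x \<in> E \<and> y \<in> D}. f z = 0}"
    by blast
qed

lemma image_eq_plus_images:
  fixes f f\<^sub>1 f\<^sub>2 :: "'a::real_vector \<Rightarrow> 'b::real_vector"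
  assumes f: "\<And>x y. x \<in> E \<Longrightarrow> y \<in> D \<Longrightarrow> f (x + y) = f\<^sub>1 x + f\<^sub>2 y"
  shows "f ` {x + y | x y. x \<in> E \<and> y \<in> D} = {x + y | x y. x \<in> f\<^sub>1 ` E \<and> y \<in> f\<^sub>2 ` D}"
proof (intro set_eqI iffI)
  fix z assume "z \<in> f ` {x + y | x y. x \<in> E \<and> y \<in> D}"
  then obtain x y where "z = f (x + y)" "x \<in> E" "y \<in> D"
    by blast
  then have "z = f\<^sub>1 x + f\<^sub>2 y" "f\<^sub>1 x \<in> f\<^sub>1 ` E" "f\<^sub>2 y \<in> f\<^sub>2 ` D"
    using f by simp_all
  then show "z \<in> {x + y | x y. x \<in> f\<^sub>1 ` E \<and> y \<in> f\<^sub>2 ` D}"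
    by blast
next
  fix z assume "z \<in> {x + y | x y. x \<in> f\<^sub>1 ` E \<and> y \<in> f\<^sub>2 ` D}"
  then obtain x y where "z = f\<^sub>1 x + f\<^sub>2 y" "x \<in> E" "y \<in> D"
    by blast
  then have "z = f (x + y)" "x + y \<in> {x + y | x y. x \<in> E \<and> y \<in> D}"
    using f by auto
  then show "z \<in> f ` {x + y | x y. x \<in> E \<and> y \<in> D}"
    by (rule image_eqI)
qed

theorem corollary4p2:
  fixes H K E D E' D' :: "(real^'n) set" and f :: "real^'n \<Rightarrow> real^'n"
  assumes "csg_decomposition H E D"
    and "csg_decomposition K E' D'"
    and "csg_hom E D E' D' f"
  shows "closed_add_subgroup {x \<in> H. f x = 0} \<and> closed_add_subgroup (f ` H)"
proof -
  have E: "subspace E" and D: "add_subgroup D" "discrete D" and "E \<inter> span D = {0}"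
    and H: "H = {x + y | x y. x \<in> E \<and> y \<in> D}" and "discrete D'" and "E' \<inter> span D' = {0}"
    using assms(1,2) unfolding csg_decomposition_def discrete_add_subgroup_def by blast+
  obtain f\<^sub>1 f\<^sub>2 where f\<^sub>1: "f\<^sub>1 ` E \<subseteq> E'" "\<forall>x\<in>E. \<forall>y\<in>E. f\<^sub>1 (x + y) = f\<^sub>1 x + f\<^sub>1 y"
      "\<forall>c. \<forall>x\<in>E. f\<^sub>1 (c *\<^sub>R x) = c *\<^sub>R f\<^sub>1 x"
    and f\<^sub>2: "f\<^sub>2 ` D \<subseteq> D'" "\<forall>x\<in>D. \<forall>y\<in>D. f\<^sub>2 (x + y) = f\<^sub>2 x + f\<^sub>2 y"
    and f: "\<And>x y. x \<in> E \<Longrightarrow> y \<in> D \<Longrightarrow> f (x + y) = f\<^sub>1 x + f\<^sub>2 y"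
    using csg_homE[OF assms(3)] by blast
  have "{x \<in> H. f x = 0} = {x + y | x y. x \<in> {x \<in> E. f\<^sub>1 x = 0} \<and> y \<in> {y \<in> D. f\<^sub>2 y = 0}}"
    unfolding H by (rule kernel_eq_plus_kernels[OF f\<^sub>1(1) f\<^sub>2(1) \<open>E' \<inter> span D' = {0}\<close> f])
  then have kernel_closed: "closed_add_subgroup {x \<in> H. f x = 0}"
    using closed_add_subgroup_plus_in_decomposition[OF \<open>E \<inter> span D = {0}\<close> D(2) _ _
        subspace_kernel_linear_on[OF E f\<^sub>1(2,3)] add_subgroup_kernel_additive_on[OF D(1) f\<^sub>2(2)]]
    by auto
  have "f ` H = {x + y | x y. x \<in> f\<^sub>1 ` E \<and> y \<in> f\<^sub>2 ` D}"
    unfolding H using f by (rule image_eq_plus_images)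
  then have image_closed: "closed_add_subgroup (f ` H)"
    using closed_add_subgroup_plus_in_decomposition[OF \<open>E' \<inter> span D' = {0}\<close> \<open>discrete D'\<close> f\<^sub>1(1) f\<^sub>2(1)
        subspace_image_linear_on[OF E f\<^sub>1(2,3)] add_subgroup_image_additive_on[OF D(1) f\<^sub>2(2)]]
    by simp
  from kernel_closed image_closed show ?thesis ..
qed

end
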